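(* Let $X$ be a connected finite $T_0$ topological space. Then $X$ has trivial shape, i.e. $X$ has the same shape as a one-point space.
   Context: Shape is meant in the sense of classical shape theory (Mardešić–Segal): the shape category $Sh$ is defined via $HPol$-expansions, where $HPol$ is the homotopy category of polyhedra. *)

theory Defs
  imports "HOL-Analysis.Analysis"
begin

definition abs_simplicial_complex :: "'v set set \<Rightarrow> bool" where
  "abs_simplicial_complex K \<longleftrightarrow>
     (\<forall>\<sigma>\<in>K. finite \<sigma> \<and> \<sigma> \<noteq> {} \<and> (\<forall>\<tau>. \<tau> \<subseteq> \<sigma> \<and> \<tau> \<noteq> {} \<longrightarrow> \<tau> \<in> K))"

definition geom_simplex :: "'v set \<Rightarrow> ('v \<Rightarrow> real) set" where
  "geom_simplex \<sigma> = {\<alpha>. (\<forall>v. 0 \<le> \<alpha> v) \<and> (\<forall>v. v \<notin> \<sigma> \<longrightarrow> \<alpha> v = 0) \<and> sum \<alpha> \<sigma> = 1}"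

definition realization_carrier :: "'v set set \<Rightarrow> ('v \<Rightarrow> real) set" where
  "realization_carrier K = (\<Union>\<sigma>\<in>K. geom_simplex \<sigma>)"

text \<open>Each closed simplex carries its Euclidean topology (subspace of the product
  topology; coordinates outside the finite simplex vanish), and the polyhedron |K|
  carries the weak (CW / Whitehead) topology coherent with its closed simplices.\<close>
definition polyhedron_top :: "'v set set \<Rightarrow> ('v \<Rightarrow> real) topology" where
  "polyhedron_top K = topology (\<lambda>U. U \<subseteq> realization_carrier K \<and>
      (\<forall>\<sigma>\<in>K. openin (subtopology (powertop_real UNIV) (geom_simplex \<sigma>))
                       (U \<inter> geom_simplex \<sigma>)))"

text \<open>Objects of HPol: spaces having the homotopy type of a polyhedron (whose vertices
  are taken in the type 'v; the theorem quantifies over all types).\<close>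
definition in_HPol :: "'p topology \<Rightarrow> 'v itself \<Rightarrow> bool" where
  "in_HPol P (_::'v itself) \<longleftrightarrow>
     (\<exists>K::'v set set. abs_simplicial_complex K \<and> P homotopy_equivalent_space polyhedron_top K)"

definition point_space :: "unit topology" where
  "point_space = discrete_topology {()}"

text \<open>X has trivial shape (Sh X = Sh pt): the morphism p : X \<rightarrow> (pt) into the
  rudimentary inverse system consisting of the one-point space is an HPol-expansion,
  i.e. satisfies the Mardesic-Segal conditions (E1) and (E2) for every P in HPol.
  Since (pt) is itself the HPol-expansion of the one-point space, this says X and
  the one-point space have isomorphic HPol-expansions.\<close>
definition has_trivial_shape :: "'a topology \<Rightarrow> 'p itself \<Rightarrow> 'v itself \<Rightarrow> bool" where
  "has_trivial_shape X (_::'p itself) (_::'v itself) \<longleftrightarrow>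
     (\<forall>P::'p topology. in_HPol P TYPE('v) \<longrightarrow>
        (\<forall>h. continuous_map X P h \<longrightarrow>
             (\<exists>f. continuous_map point_space P f \<and>
                  homotopic_with (\<lambda>_. True) X P h (f \<circ> (\<lambda>_. ())))) \<and>
        (\<forall>f f'. continuous_map point_space P f \<and> continuous_map point_space P f' \<and>
             homotopic_with (\<lambda>_. True) X P (f \<circ> (\<lambda>_. ())) (f' \<circ> (\<lambda>_. ())) \<longrightarrow>
             homotopic_with (\<lambda>_. True) point_space P f f'))"

end

theory Submission
  imports Defs
begin

text \<open>Polyhedra are \<open>T\<^sub>1\<close> (their topology is finer than the product topology of the
  barycentric coordinates), and a continuous map from a connected finite space into a
  \<open>T\<^sub>1\<close> space is constant, because a finite connected \<open>T\<^sub>1\<close> space is a point.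
  Hence every map from \<open>X\<close> into a space homotopy equivalent to a polyhedron is
  homotopic to a constant map, which is condition (E1); condition (E2) holds because
  two constant maps on the nonempty space \<open>X\<close> are homotopic exactly when their values
  lie in one path component.\<close>

lemma istopology_coherent:
  "istopology (\<lambda>U. U \<subseteq> C \<and> (\<forall>i\<in>I. openin (T i) (U \<inter> S i)))"
  unfolding istopology_def
proof (rule conjI; intro allI impI)
  fix U V assume U: "U \<subseteq> C \<and> (\<forall>i\<in>I. openin (T i) (U \<inter> S i))"
    and V: "V \<subseteq> C \<and> (\<forall>i\<in>I. openin (T i) (V \<inter> S i))"
  have "openin (T i) (U \<inter> V \<inter> S i)" if "i \<in> I" for i
  proof -
    have "openin (T i) ((U \<inter> S i) \<inter> (V \<inter> S i))"
      using U V that by blast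
    moreover have "(U \<inter> S i) \<inter> (V \<inter> S i) = U \<inter> V \<inter> S i"
      by blast
    ultimately show ?thesis
      by simp
  qed
  with U V show "U \<inter> V \<subseteq> C \<and> (\<forall>i\<in>I. openin (T i) (U \<inter> V \<inter> S i))"
    by blast
next
  fix \<U> assume \<U>: "\<forall>U\<in>\<U>. U \<subseteq> C \<and> (\<forall>i\<in>I. openin (T i) (U \<inter> S i))"
  have "openin (T i) (\<Union>\<U> \<inter> S i)" if "i \<in> I" for i
  proof -
    have "openin (T i) (\<Union>U\<in>\<U>. U \<inter> S i)"
      using \<U> that by blast
    moreover have "(\<Union>U\<in>\<U>. U \<inter> S i) = \<Union>\<U> \<inter> S i"
      by blast
    ultimately show ?thesis
      by simp
  qed
  with \<U> show "\<Union>\<U> \<subseteq> C \<and> (\<forall>i\<in>I. openin (T i) (\<Union>\<U> \<inter> S i))"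
    by blast
qed

lemma openin_polyhedron_top:
  "openin (polyhedron_top K) U \<longleftrightarrow> U \<subseteq> realization_carrier K \<and>
     (\<forall>\<sigma>\<in>K. openin (subtopology (powertop_real UNIV) (geom_simplex \<sigma>)) (U \<inter> geom_simplex \<sigma>))"
  unfolding polyhedron_top_def topology_inverse'[OF istopology_coherent] ..

lemma openin_polyhedron_top_Int_carrier:
  assumes "openin (powertop_real UNIV) U"
  shows "openin (polyhedron_top K) (realization_carrier K \<inter> U)"
  unfolding openin_polyhedron_top
proof (intro conjI ballI)
  fix \<sigma> assume "\<sigma> \<in> K"
  then have "realization_carrier K \<inter> U \<inter> geom_simplex \<sigma> = geom_simplex \<sigma> \<inter> U"
    unfolding realization_carrier_def by blast
  then show "openin (subtopology (powertop_real UNIV) (geom_simplex \<sigma>))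
               (realization_carrier K \<inter> U \<inter> geom_simplex \<sigma>)"
    using openin_subtopology_Int2[OF assms] by simp
qed auto

lemma topspace_polyhedron_top: "topspace (polyhedron_top K) = realization_carrier K"
proof (rule antisym)
  show "topspace (polyhedron_top K) \<subseteq> realization_carrier K"
    using openin_polyhedron_top openin_topspace by blast
  show "realization_carrier K \<subseteq> topspace (polyhedron_top K)"
    using openin_polyhedron_top_Int_carrier[OF openin_topspace, of K] openin_subset by simp
qed

lemma t1_space_polyhedron_top: "t1_space (polyhedron_top K)"
  unfolding t1_space_def topspace_polyhedron_top
proof (intro ballI impI)
  fix x y assume "x \<in> realization_carrier K" "x \<noteq> y"
  have "t1_space (powertop_real (UNIV::'a set))"
    by (simp add: t1_space_product_topology t1_space_euclidean)
  then have "openin (powertop_real UNIV) (UNIV - {y})"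
    using openin_topspace[of "powertop_real UNIV"] t1_space_openin_delete_alt by fastforce
  then have "openin (polyhedron_top K) (realization_carrier K \<inter> (UNIV - {y}))"
    by (rule openin_polyhedron_top_Int_carrier)
  with \<open>x \<in> realization_carrier K\<close> \<open>x \<noteq> y\<close>
  show "\<exists>U. openin (polyhedron_top K) U \<and> x \<in> U \<and> y \<notin> U"
    by blast
qed

lemma continuous_map_finite_connected_t1_const:
  assumes "continuous_map X Y h" "connected_space X" "finite (topspace X)" "t1_space Y"
    and "x \<in> topspace X" "x' \<in> topspace X"
  shows "h x = h x'"
proof -
  let ?S = "h ` topspace X"
  have "connectedin Y ?S"
    using assms(1,2) connectedin_continuous_map_image connectedin_topspace by blast
  then have "connected_space (subtopology Y ?S)" and "topspace (subtopology Y ?S) = ?S"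
    by (auto simp: connectedin_def)
  moreover have "t1_space (subtopology Y ?S)"
    using assms(4) by (rule t1_space_subtopology)
  ultimately obtain a where "?S \<subseteq> {a}"
    using connected_space_imp_infinite_gen assms(3) by (metis finite_imageI)
  with assms(5,6) show ?thesis
    by blast
qed

lemma nullhomotopic_into_homotopy_equivalent_t1:
  assumes "P homotopy_equivalent_space Q" "t1_space Q"
    and "continuous_map X P h" "connected_space X" "finite (topspace X)" "topspace X \<noteq> {}"
  obtains c where "c \<in> topspace P" "homotopic_with (\<lambda>_. True) X P h (\<lambda>_. c)"
proof -
  obtain g k where g: "continuous_map P Q g" and k: "continuous_map Q P k"
    and kg: "homotopic_with (\<lambda>_. True) P P (k \<circ> g) id"
    using assms(1) unfolding homotopy_equivalent_space_def by blast
  obtain x where x: "x \<in> topspace X"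
    using assms(6) by blast
  note homotopic_with_trans [trans]
  have "homotopic_with (\<lambda>_. True) X P (k \<circ> g \<circ> h) (id \<circ> h)"
    using homotopic_with_compose_continuous_map_right[OF kg assms(3)] by simp
  then have "homotopic_with (\<lambda>_. True) X P h (k \<circ> g \<circ> h)"
    by (simp add: homotopic_with_sym)
  also have "homotopic_with (\<lambda>_. True) X P (k \<circ> g \<circ> h) (\<lambda>_. k (g (h x)))"
  proof (rule homotopic_with_equal)
    show "continuous_map X P (k \<circ> g \<circ> h)"
      using assms(3) g k by (auto intro: continuous_map_compose)
    show "(k \<circ> g \<circ> h) x' = k (g (h x))" if "x' \<in> topspace X" for x'
      using continuous_map_finite_connected_t1_const[OF continuous_map_compose[OF assms(3) g]
          assms(4,5,2) that x] by simp
  qed auto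
  finally have "homotopic_with (\<lambda>_. True) X P h (\<lambda>_. k (g (h x)))" .
  moreover have "k (g (h x)) \<in> topspace P"
    using x assms(3) g k by (meson continuous_map_image_subset_topspace image_subset_iff)
  ultimately show ?thesis
    using that by blast
qed

lemma homotopic_constant_maps_change_domain:
  assumes "homotopic_with (\<lambda>_. True) X P (\<lambda>_. a) (\<lambda>_. b)" "topspace X \<noteq> {}"
  shows "homotopic_with (\<lambda>_. True) Y P (\<lambda>_. a) (\<lambda>_. b)"
  using assms by (simp add: homotopic_constant_maps)

theorem proposition2p1:
  fixes X :: "'a topology"
  assumes "finite (topspace X)"
    and "t0_space X"
    and "connected_space X"
    and "topspace X \<noteq> {}"
  shows "has_trivial_shape X TYPE('p) TYPE('v)"
  unfolding has_trivial_shape_def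
proof (intro allI impI conjI)
  fix P :: "'p topology" and h
  assume "in_HPol P TYPE('v)" and h: "continuous_map X P h"
  then obtain K :: "'v set set" where "P homotopy_equivalent_space polyhedron_top K"
    unfolding in_HPol_def by blast
  then obtain c where "c \<in> topspace P" "homotopic_with (\<lambda>_. True) X P h (\<lambda>_. c)"
    using nullhomotopic_into_homotopy_equivalent_t1[OF _ t1_space_polyhedron_top h assms(3,1,4)]
    by blast
  then show "\<exists>f. continuous_map point_space P f \<and> homotopic_with (\<lambda>_. True) X P h (f \<circ> (\<lambda>_. ()))"
    by (intro exI[of _ "\<lambda>_. c"]) (simp add: o_def)
next
  fix P :: "'p topology" and f f' :: "unit \<Rightarrow> 'p"
  assume "continuous_map point_space P f \<and> continuous_map point_space P f' \<and>
    homotopic_with (\<lambda>_. True) X P (f \<circ> (\<lambda>_. ())) (f' \<circ> (\<lambda>_. ()))"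
  then have "homotopic_with (\<lambda>_. True) X P (\<lambda>_. f ()) (\<lambda>_. f' ())"
    by (simp only: comp_def)
  then have "homotopic_with (\<lambda>_. True) point_space P (\<lambda>_. f ()) (\<lambda>_. f' ())"
    using assms(4) by (rule homotopic_constant_maps_change_domain)
  moreover have "(\<lambda>_. f ()) = f" "(\<lambda>_. f' ()) = f'"
    by auto
  ultimately show "homotopic_with (\<lambda>_. True) point_space P f f'"
    by simp
qed

end
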